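(* Let $L$ be an $n\times n$ nonsingular M-matrix with integer entries and nonnegative row sums. Then every equivalence class of $\mathbb{Z}^n$ under $\sim$ contains a unique energy minimizer, a unique $z$-superstable configuration and a unique $\chi$-superstable configuration, and these three configurations coincide.
   Context: A Z-matrix is a square real matrix whose off-diagonal entries are all $\le 0$. A nonsingular M-matrix is a Z-matrix $L$ that is invertible with $L^{-1}$ having all entries nonnegative. Vector inequalities are entrywise. For $f,g\in\mathbb{Z}^n$, $f\sim g$ means $g-f=Lz$ for some $z\in\mathbb{Z}^n$. For $q\in\mathbb{Z}^n$, $E(q)=\|L^{-1}q\|_2^2$; an energy minimizer in the class of $f$ is a $g\in\mathbb{Z}^n$, $g\ge0$, $g\sim f$, minimizing $E$ among all such vectors. A vector $f\in\mathbb{Z}^n$ with $f\ge0$ is $\chi$-superstable if for every $\chi\in\{0,1\}^n$, $\chi\ne0$, there is $i$ with $f_i-(L\chi)_i<0$; it is $z$-superstable if for every $z\in\mathbb{Z}^n$, $z\ge0$, $z\ne0$, there is $i$ with $f_i-(Lz)_i<0$. *)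

theory Defs
  imports "HOL-Analysis.Analysis"
begin

definition real_mat :: "int^'n^'m \<Rightarrow> real^'n^'m" where
  "real_mat L = (\<chi> i j. real_of_int (L $ i $ j))"

definition real_vec :: "int^'n \<Rightarrow> real^'n" where
  "real_vec q = (\<chi> i. real_of_int (q $ i))"

definition Z_matrix :: "int^'n^'n \<Rightarrow> bool" where
  "Z_matrix L \<longleftrightarrow> (\<forall>i j. i \<noteq> j \<longrightarrow> L $ i $ j \<le> 0)"

definition nonsingular_M_matrix :: "int^'n^'n \<Rightarrow> bool" where
  "nonsingular_M_matrix L \<longleftrightarrow> Z_matrix L \<and> invertible (real_mat L)
     \<and> (\<forall>i j. matrix_inv (real_mat L) $ i $ j \<ge> 0)"

definition nonneg_row_sums :: "int^'n^'n \<Rightarrow> bool" where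
  "nonneg_row_sums L \<longleftrightarrow> (\<forall>i. (\<Sum>j\<in>UNIV. L $ i $ j) \<ge> 0)"

definition nonneg_vec :: "int^'n \<Rightarrow> bool" where
  "nonneg_vec f \<longleftrightarrow> (\<forall>i. f $ i \<ge> 0)"

definition lequiv :: "int^'n^'n \<Rightarrow> int^'n \<Rightarrow> int^'n \<Rightarrow> bool" where
  "lequiv L f g \<longleftrightarrow> (\<exists>z::int^'n. g - f = L *v z)"

definition energy :: "int^'n^'n \<Rightarrow> int^'n \<Rightarrow> real" where
  "energy L q = (norm (matrix_inv (real_mat L) *v real_vec q))\<^sup>2"

definition energy_minimizer :: "int^'n^'n \<Rightarrow> int^'n \<Rightarrow> int^'n \<Rightarrow> bool" where
  "energy_minimizer L f g \<longleftrightarrow> nonneg_vec g \<and> lequiv L f g \<and>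
     (\<forall>h. nonneg_vec h \<and> lequiv L f h \<longrightarrow> energy L g \<le> energy L h)"

definition chi_superstable :: "int^'n^'n \<Rightarrow> int^'n \<Rightarrow> bool" where
  "chi_superstable L f \<longleftrightarrow> nonneg_vec f \<and>
     (\<forall>c::int^'n. (\<forall>i. c $ i \<in> {0,1}) \<and> c \<noteq> 0 \<longrightarrow> (\<exists>i. f $ i - (L *v c) $ i < 0))"

definition z_superstable :: "int^'n^'n \<Rightarrow> int^'n \<Rightarrow> bool" where
  "z_superstable L f \<longleftrightarrow> nonneg_vec f \<and>
     (\<forall>z::int^'n. nonneg_vec z \<and> z \<noteq> 0 \<longrightarrow> (\<exists>i. f $ i - (L *v z) $ i < 0))"

end

theory Submission
  imports Defs
begin

text \<open>Every class meets the nonnegative orthant, and since \<open>L\<^sup>-\<^sup>1h = L\<^sup>-\<^sup>1f + z\<close> for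
  \<open>h = f + Lz\<close>, sublevel sets of the energy on a class are finite; so an energy minimizer exists.
  As \<open>L\<^sup>-\<^sup>1 \<ge> 0\<close>, if \<open>g - Lz \<ge> 0\<close> with \<open>z \<ge> 0\<close>, \<open>z \<noteq> 0\<close>, then \<open>L\<^sup>-\<^sup>1g\<close> is the sum of the
  nonnegative vectors \<open>L\<^sup>-\<^sup>1(g - Lz)\<close> and \<open>z\<close>, so \<open>g - Lz\<close> has smaller energy: minimizers are
  \<open>z\<close>-superstable. Two \<open>z\<close>-superstable \<open>g\<close> and \<open>h = g + Lw\<close> coincide: writing
  \<open>w = q - p\<close> with disjointly supported \<open>p, q \<ge> 0\<close>, the sign pattern of a Z-matrix gives
  \<open>g - Lp = h - Lq \<ge> 0\<close>, hence \<open>p = 0\<close>, and symmetrically \<open>w = 0\<close>. Finally a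
  \<open>\<chi>\<close>-superstable configuration is \<open>z\<close>-superstable: if \<open>g - Lz \<ge> 0\<close>, then by the
  nonnegative row sums also \<open>g - L\<chi> \<ge> 0\<close> for the indicator \<open>\<chi>\<close> of the maximal entries of \<open>z\<close>.\<close>

lemma matrix_inv_right:
  fixes A :: "'a::semiring_1^'n^'m"
  assumes "invertible A"
  shows "A ** matrix_inv A = mat 1"
  using someI_ex[OF assms[unfolded invertible_def]] unfolding matrix_inv_def by auto

lemma matrix_inv_left:
  fixes A :: "'a::semiring_1^'n^'m"
  assumes "invertible A"
  shows "matrix_inv A ** A = mat 1"
  using someI_ex[OF assms[unfolded invertible_def]] unfolding matrix_inv_def by auto

lemma real_vec_add: "real_vec (a + b) = real_vec a + real_vec b"
  by (simp add: real_vec_def vec_eq_iff)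

lemma real_vec_matrix_vector_mult: "real_vec (L *v z) = real_mat L *v real_vec z"
  by (simp add: real_vec_def real_mat_def matrix_vector_mult_def vec_eq_iff)

lemma matrix_vector_mult_uminus_right:
  fixes A :: "'a::ring_1^'n^'m"
  shows "A *v (- x) = - (A *v x)"
  using matrix_vector_mult_diff_distrib[of A 0 x] by simp

lemma lequiv_iff: "lequiv L f h \<longleftrightarrow> (\<exists>z. h = f + L *v z)"
  unfolding lequiv_def by (simp add: diff_eq_eq add.commute)

lemma lequiv_sym: "lequiv L f g \<Longrightarrow> lequiv L g f"
  unfolding lequiv_def by (metis minus_diff_eq matrix_vector_mult_uminus_right)

lemma lequiv_trans: "lequiv L f g \<Longrightarrow> lequiv L g h \<Longrightarrow> lequiv L f h"
  unfolding lequiv_iff by (metis add.assoc matrix_vector_right_distrib)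

lemma matrix_inv_real_vec_shift:
  fixes L :: "int^'n^'n"
  assumes "invertible (real_mat L)"
  shows "matrix_inv (real_mat L) *v real_vec (f + L *v z)
           = matrix_inv (real_mat L) *v real_vec f + real_vec z"
  by (simp add: real_vec_add real_vec_matrix_vector_mult matrix_vector_right_distrib
      matrix_vector_mul_assoc matrix_inv_left[OF assms])

lemma Z_matrix_mult_nonpos_at_zero:
  fixes L :: "int^'n^'n"
  assumes "Z_matrix L" "nonneg_vec q" "q $ i = 0"
  shows "(L *v q) $ i \<le> 0"
proof -
  have "L $ i $ j * q $ j \<le> 0" for j
    using assms unfolding Z_matrix_def nonneg_vec_def
    by (cases "j = i") (auto simp: mult_nonpos_nonneg)
  then show ?thesis
    by (simp add: matrix_vector_mult_def sum_nonpos)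
qed

lemma z_superstable_nonneg_shift:
  fixes L :: "int^'n^'n"
  assumes Z: "Z_matrix L" and g: "z_superstable L g" and h: "nonneg_vec h"
    and hg: "h = g + L *v w"
  shows "nonneg_vec w"
proof -
  define q where "q = (\<chi> i. max 0 (w $ i))"
  define p where "p = (\<chi> i. max 0 (- w $ i))"
  have pq: "nonneg_vec p" "nonneg_vec q"
    unfolding p_def q_def nonneg_vec_def by auto
  have "g - L *v p = h - L *v q"
  proof -
    have "q = p + w" unfolding p_def q_def by (auto simp: vec_eq_iff max_def)
    then show ?thesis
      using hg by (simp add: matrix_vector_right_distrib)
  qed
  then have "0 \<le> g $ i - (L *v p) $ i" for i
  proof (cases "w $ i \<ge> 0")
    case True
    then have "p $ i = 0"
      unfolding p_def by simp
    then have "(L *v p) $ i \<le> 0"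
      using Z_matrix_mult_nonpos_at_zero[OF Z pq(1)] by blast
    moreover have "0 \<le> g $ i"
      using g unfolding z_superstable_def nonneg_vec_def by blast
    ultimately show ?thesis
      by linarith
  next
    case False
    then have "q $ i = 0"
      unfolding q_def by simp
    then have "(L *v q) $ i \<le> 0"
      using Z_matrix_mult_nonpos_at_zero[OF Z pq(2)] by blast
    moreover have "0 \<le> h $ i"
      using h unfolding nonneg_vec_def by blast
    ultimately have "0 \<le> h $ i - (L *v q) $ i"
      by linarith
    then show ?thesis
      using \<open>g - L *v p = h - L *v q\<close> by (simp add: vec_eq_iff)
  qed
  then have "p = 0"
    using g pq(1) unfolding z_superstable_def by (metis linorder_not_less)
  then have "max 0 (- w $ i) = 0" for i
    unfolding p_def vec_eq_iff by simp
  then have "0 \<le> w $ i" for i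
    by (metis max.cobounded2 neg_le_0_iff_le)
  then show ?thesis
    unfolding nonneg_vec_def ..
qed

lemma z_superstable_unique:
  fixes L :: "int^'n^'n"
  assumes Z: "Z_matrix L" and g: "z_superstable L g" and h: "z_superstable L h"
    and "lequiv L g h"
  shows "h = g"
proof -
  obtain w where hg: "h = g + L *v w"
    using \<open>lequiv L g h\<close> unfolding lequiv_iff by blast
  then have gh: "g = h + L *v (- w)"
    by (simp add: matrix_vector_mult_uminus_right)
  have "nonneg_vec w" "nonneg_vec (- w)"
    using z_superstable_nonneg_shift[OF Z g _ hg] z_superstable_nonneg_shift[OF Z h _ gh] g h
    unfolding z_superstable_def by auto
  then have "w = 0"
    unfolding nonneg_vec_def by (auto simp: vec_eq_iff intro: antisym)
  then show ?thesis
    using hg by simp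
qed

lemma z_superstable_imp_chi_superstable:
  fixes L :: "int^'n^'n"
  assumes "z_superstable L g"
  shows "chi_superstable L g"
proof -
  have "nonneg_vec c" if "\<forall>i. c $ i \<in> {0, 1}" for c :: "int^'n"
    using that unfolding nonneg_vec_def by (metis empty_iff insert_iff order_refl zero_le_one)
  then show ?thesis
    using assms unfolding z_superstable_def chi_superstable_def by blast
qed

lemma chi_superstable_imp_z_superstable:
  fixes L :: "int^'n^'n"
  assumes Z: "Z_matrix L" and R: "nonneg_row_sums L" and g: "chi_superstable L g"
  shows "z_superstable L g"
  unfolding z_superstable_def
proof (intro conjI allI impI)
  show "nonneg_vec g"
    using g unfolding chi_superstable_def by auto
  fix z :: "int^'n"
  assume z: "nonneg_vec z \<and> z \<noteq> 0"
  define M where "M = Max (range (\<lambda>i. z $ i))"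
  define c where "c = (\<chi> i. if z $ i = M then 1 else (0::int))"
  have z_le_M: "z $ i \<le> M" for i
    unfolding M_def by simp
  have "M \<in> range (\<lambda>i. z $ i)"
    unfolding M_def by (rule Max_in) auto
  then obtain k where k: "z $ k = M"
    by blast
  obtain j where "z $ j \<noteq> 0"
    using z by (auto simp: vec_eq_iff)
  then have M_pos: "M \<ge> 1"
    using z z_le_M[of j] unfolding nonneg_vec_def by (metis int_one_le_iff_zero_less order.trans order_less_le)
  have c_chi: "(\<forall>i. c $ i \<in> {0,1}) \<and> c \<noteq> 0"
    using k unfolding c_def by (auto simp: vec_eq_iff)
  have "(L *v c) $ i \<le> (L *v z) $ i" if "z $ i = M" for i
  proof -
    have "L $ i $ j * c $ j \<le> L $ i $ j * z $ j - (M - 1) * L $ i $ j" for j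
    proof (cases "z $ j = M")
      case False
      then have "j \<noteq> i"
        using that by auto
      then have "L $ i $ j \<le> 0" "z $ j - (M - 1) \<le> 0"
        using Z False z_le_M[of j] unfolding Z_matrix_def by auto
      then have "0 \<le> L $ i $ j * (z $ j - (M - 1))"
        by (rule mult_nonpos_nonpos)
      then show ?thesis
        using False unfolding c_def by (simp add: algebra_simps)
    qed (simp add: c_def algebra_simps)
    then have "(L *v c) $ i \<le> (L *v z) $ i - (M - 1) * (\<Sum>j\<in>UNIV. L $ i $ j)"
      by (simp add: matrix_vector_mult_def sum_distrib_left sum_subtractf[symmetric] sum_mono)
    moreover have "0 \<le> (M - 1) * (\<Sum>j\<in>UNIV. L $ i $ j)"
      using R M_pos unfolding nonneg_row_sums_def by simp
    ultimately show ?thesis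
      by linarith
  qed
  moreover obtain i where i: "g $ i - (L *v c) $ i < 0"
    using g c_chi unfolding chi_superstable_def by blast
  moreover have "z $ i = M"
  proof (rule ccontr)
    assume "z $ i \<noteq> M"
    then have "(L *v c) $ i \<le> 0"
      using Z_matrix_mult_nonpos_at_zero[OF Z, of c i] unfolding c_def nonneg_vec_def by simp
    with i \<open>nonneg_vec g\<close> show False
      unfolding nonneg_vec_def by (smt (verit))
  qed
  ultimately have "g $ i - (L *v z) $ i < 0"
    by fastforce
  then show "\<exists>i. g $ i - (L *v z) $ i < 0" ..
qed

lemma energy_minimizer_z_superstable:
  fixes L :: "int^'n^'n"
  assumes M: "nonsingular_M_matrix L" and g: "energy_minimizer L f g"
  shows "z_superstable L g"
  unfolding z_superstable_def
proof (intro conjI allI impI)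
  show "nonneg_vec g"
    using g unfolding energy_minimizer_def by auto
  fix z :: "int^'n"
  assume z: "nonneg_vec z \<and> z \<noteq> 0"
  show "\<exists>i. g $ i - (L *v z) $ i < 0"
  proof (rule ccontr)
    assume "\<not> ?thesis"
    then have h: "nonneg_vec (g - L *v z)"
      unfolding nonneg_vec_def by (simp add: not_less)
    obtain w where "g - f = L *v w"
      using g unfolding energy_minimizer_def lequiv_def by blast
    then have "(g - L *v z) - f = L *v (w - z)"
      by (simp add: matrix_vector_mult_diff_distrib algebra_simps)
    then have "lequiv L f (g - L *v z)"
      unfolding lequiv_def by blast
    with g h have le: "energy L g \<le> energy L (g - L *v z)"
      unfolding energy_minimizer_def by blast
    define A where "A = matrix_inv (real_mat L)"
    define u where "u = A *v real_vec (g - L *v z)"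
    define zr where "zr = real_vec z"
    have inv: "invertible (real_mat L)" and A_nonneg: "\<forall>i j. A $ i $ j \<ge> 0"
      using M unfolding nonsingular_M_matrix_def A_def by auto
    have "A *v real_vec g = u + zr"
      using matrix_inv_real_vec_shift[OF inv, of "g - L *v z" z]
      unfolding u_def zr_def A_def by simp
    then have "energy L g = inner u u + 2 * inner u zr + inner zr zr"
      unfolding energy_def A_def[symmetric] power2_norm_eq_inner
      by (simp add: inner_add_left inner_add_right inner_commute)
    moreover have "energy L (g - L *v z) = inner u u"
      unfolding energy_def A_def[symmetric] u_def[symmetric] power2_norm_eq_inner by simp
    moreover have "inner u zr \<ge> 0"
    proof -
      have "0 \<le> real_vec (g - L *v z) $ j" "0 \<le> zr $ j" for j
        using h z unfolding zr_def nonneg_vec_def real_vec_def by auto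
      then have "0 \<le> u $ i" for i
        using A_nonneg unfolding u_def matrix_vector_mult_def by (simp add: sum_nonneg)
      with \<open>\<And>j. 0 \<le> zr $ j\<close> show ?thesis
        unfolding inner_vec_def by (simp add: sum_nonneg)
    qed
    moreover have "inner zr zr > 0"
      using z unfolding zr_def real_vec_def by (auto simp: vec_eq_iff)
    ultimately show False
      using le by linarith
  qed
qed

text \<open>With \<open>u = L\<^sup>-\<^sup>1\<one>\<close> and \<open>z = \<lceil>c u\<rceil>\<close> one gets \<open>Lz = c\<one> + Le\<close> with \<open>0 \<le> e \<le> 1\<close>;
  the constant \<open>c\<close> is chosen to dominate both \<open>|f|\<close> and \<open>|Le|\<close>.\<close>

lemma exists_nonneg_lequiv:
  fixes L :: "int^'n^'n"
  assumes inv: "invertible (real_mat L)"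
  shows "\<exists>h. nonneg_vec h \<and> lequiv L f h"
proof -
  define Lr where "Lr = real_mat L"
  define u where "u = matrix_inv Lr *v (\<chi> i. 1)"
  define c where "c = (\<Sum>i\<in>UNIV. \<Sum>j\<in>UNIV. \<bar>Lr $ i $ j\<bar>) + (\<Sum>i\<in>UNIV. \<bar>real_of_int (f $ i)\<bar>)"
  define z :: "int^'n" where "z = (\<chi> i. \<lceil>c * u $ i\<rceil>)"
  define e where "e = real_vec z - c *\<^sub>R u"
  have e01: "0 \<le> e $ j \<and> e $ j \<le> 1" for j
    unfolding e_def z_def real_vec_def by (simp; linarith)
  have Lu: "Lr *v u = (\<chi> i. 1)"
    unfolding u_def Lr_def matrix_vector_mul_assoc matrix_inv_right[OF inv] by simp
  have "real_vec (f + L *v z) = real_vec f + c *\<^sub>R (\<chi> i. 1) + Lr *v e"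
    unfolding real_vec_add real_vec_matrix_vector_mult Lr_def[symmetric] e_def
    by (simp add: matrix_vector_mult_diff_distrib matrix_vector_mult_scaleR Lu)
  then have shifted: "real_of_int ((f + L *v z) $ i) = real_of_int (f $ i) + c + (Lr *v e) $ i" for i
    unfolding vec_eq_iff real_vec_def by simp
  have "0 \<le> real_of_int (f $ i) + c + (Lr *v e) $ i" for i
  proof -
    have "- \<bar>Lr $ i $ j\<bar> \<le> Lr $ i $ j * e $ j" for j
      using e01[of j] abs_mult[of "Lr $ i $ j" "e $ j"] mult_left_le[of "\<bar>e $ j\<bar>" "\<bar>Lr $ i $ j\<bar>"]
      by (simp; linarith)
    then have "- (\<Sum>j\<in>UNIV. \<bar>Lr $ i $ j\<bar>) \<le> (Lr *v e) $ i"
      unfolding matrix_vector_mult_def by (simp add: sum_negf[symmetric] sum_mono)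
    moreover have "(\<Sum>j\<in>UNIV. \<bar>Lr $ i $ j\<bar>) \<le> (\<Sum>i\<in>UNIV. \<Sum>j\<in>UNIV. \<bar>Lr $ i $ j\<bar>)"
      by (rule member_le_sum) (auto intro: sum_nonneg)
    moreover have "\<bar>real_of_int (f $ i)\<bar> \<le> (\<Sum>i\<in>UNIV. \<bar>real_of_int (f $ i)\<bar>)"
      by (rule member_le_sum) auto
    ultimately show ?thesis
      unfolding c_def by linarith
  qed
  then have "nonneg_vec (f + L *v z)"
    unfolding nonneg_vec_def by (metis shifted of_int_0_le_iff)
  then show ?thesis
    unfolding lequiv_iff by blast
qed

lemma finite_int_box: "finite {z :: int^'n. \<forall>i. \<bar>z $ i\<bar> \<le> N}"
proof -
  have "{z :: int^'n. \<forall>i. \<bar>z $ i\<bar> \<le> N} = vec_nth -` PiE UNIV (\<lambda>_. {-N..N})"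
    by (auto simp: PiE_def Pi_def abs_le_iff minus_le_iff)
  moreover have "inj (vec_nth :: int^'n \<Rightarrow> 'n \<Rightarrow> int)"
    by (rule injI) (simp add: vec_eq_iff)
  ultimately show ?thesis
    by (simp add: finite_vimageI finite_PiE)
qed

lemma finite_energy_sublevel:
  fixes L :: "int^'n^'n"
  assumes inv: "invertible (real_mat L)"
  shows "finite {h. lequiv L f h \<and> energy L h \<le> E}"
proof -
  define A where "A = matrix_inv (real_mat L)"
  define N where "N = \<lceil>sqrt E + norm (A *v real_vec f)\<rceil>"
  have "\<forall>i. \<bar>z $ i\<bar> \<le> N" if "energy L (f + L *v z) \<le> E" for z
  proof
    fix i
    have "norm (A *v real_vec (f + L *v z)) \<le> sqrt E"
      using that unfolding energy_def A_def by (simp add: real_le_rsqrt)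
    then have "norm (real_vec z) \<le> sqrt E + norm (A *v real_vec f)"
      using norm_triangle_ineq4[of "A *v real_vec (f + L *v z)" "A *v real_vec f"]
      unfolding A_def matrix_inv_real_vec_shift[OF inv] by simp
    then have "real_of_int \<bar>z $ i\<bar> \<le> sqrt E + norm (A *v real_vec f)"
      using component_le_norm_cart[of "real_vec z" i] by (simp add: real_vec_def)
    then show "\<bar>z $ i\<bar> \<le> N"
      unfolding N_def by linarith
  qed
  then have "{h. lequiv L f h \<and> energy L h \<le> E}
               \<subseteq> (\<lambda>z. f + L *v z) ` {z. \<forall>i. \<bar>z $ i\<bar> \<le> N}"
    unfolding lequiv_iff by blast
  then show ?thesis
    using finite_subset finite_imageI[OF finite_int_box] by blast
qed

lemma energy_minimizer_exists:
  fixes L :: "int^'n^'n"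
  assumes inv: "invertible (real_mat L)"
  shows "\<exists>g. energy_minimizer L f g"
proof -
  obtain h0 where h0: "nonneg_vec h0" "lequiv L f h0"
    using exists_nonneg_lequiv[OF inv] by blast
  define T where "T = {h. nonneg_vec h \<and> lequiv L f h \<and> energy L h \<le> energy L h0}"
  have "finite T"
    using finite_energy_sublevel[OF inv, of f "energy L h0"] unfolding T_def
    by (rule finite_subset[rotated]) blast
  moreover have "h0 \<in> T"
    using h0 unfolding T_def by simp
  ultimately obtain g where "g \<in> T" and "\<forall>h. h \<in> T \<longrightarrow> energy L g \<le> energy L h"
    using ex_is_arg_min_if_finite[of T "energy L"] unfolding is_arg_min_linorder by blast
  then have "energy_minimizer L f g"
    unfolding energy_minimizer_def T_def by force
  then show ?thesis ..
qed

theorem mainTheorem7: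
  fixes L :: "int^'n^'n"
  assumes "nonsingular_M_matrix L"
    and "nonneg_row_sums L"
  shows "\<forall>f::int^'n. \<exists>g.
           energy_minimizer L f g \<and> z_superstable L g \<and> chi_superstable L g \<and>
           (\<forall>h. energy_minimizer L f h \<longrightarrow> h = g) \<and>
           (\<forall>h. lequiv L f h \<and> z_superstable L h \<longrightarrow> h = g) \<and>
           (\<forall>h. lequiv L f h \<and> chi_superstable L h \<longrightarrow> h = g)"
proof
  fix f :: "int^'n"
  have Z: "Z_matrix L" and inv: "invertible (real_mat L)"
    using assms(1) unfolding nonsingular_M_matrix_def by auto
  obtain g where g: "energy_minimizer L f g"
    using energy_minimizer_exists[OF inv] by blast
  have g_z: "z_superstable L g"
    using energy_minimizer_z_superstable[OF assms(1) g] .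
  have "lequiv L g f"
    using g lequiv_sym unfolding energy_minimizer_def by blast
  then have unique: "h = g" if "lequiv L f h" "z_superstable L h" for h
    using z_superstable_unique[OF Z g_z that(2)] lequiv_trans that(1) by blast
  have minimizer_unique: "h = g" if "energy_minimizer L f h" for h
    using unique[OF _ energy_minimizer_z_superstable[OF assms(1) that]] that
    unfolding energy_minimizer_def by blast
  have chi_unique: "h = g" if "lequiv L f h" "chi_superstable L h" for h
    using unique[OF that(1) chi_superstable_imp_z_superstable[OF Z assms(2) that(2)]] .
  show "\<exists>g. energy_minimizer L f g \<and> z_superstable L g \<and> chi_superstable L g \<and>
           (\<forall>h. energy_minimizer L f h \<longrightarrow> h = g) \<and>
           (\<forall>h. lequiv L f h \<and> z_superstable L h \<longrightarrow> h = g) \<and>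
           (\<forall>h. lequiv L f h \<and> chi_superstable L h \<longrightarrow> h = g)"
    using g g_z z_superstable_imp_chi_superstable[OF g_z] minimizer_unique unique chi_unique
    by blast
qed

end
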